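(* Let $\mathcal{G}=(\mathcal{V}_A\cup\mathcal{V}_T,\mathcal{E},w)$ be a weighted bipartite graph with $|\mathcal{V}_A|\le|\mathcal{V}_T|$ that has at least one maximum matching, and let $e^*\in A(\mathcal{G})$ be a bottleneck edge. Let $\mathcal{G}^-$ be obtained from $\mathcal{G}$ by deleting both endpoints of $e^*$ and all edges incident to them, and $\mathcal{G}^+$ be obtained from $\mathcal{G}$ by deleting only the edge $e^*$; let $e^-\in A(\mathcal{G}^-)$ be a bottleneck edge of $\mathcal{G}^-$. For $\Delta\ge 0$ let $\Lambda_\Delta$ be the set of perturbations $\{\delta_e\}_{e\in\mathcal{E}}$ with $|\delta_e|\le\Delta$ for all $e\in\mathcal{E}$. (i) If $\mathcal{G}^+$ has a maximum matching, with bottleneck edge $e^+\in A(\mathcal{G}^+)$, and $$0\le\Delta\le\tfrac12\min\big(w_{e^*}-w_{e^-},\,w_{e^+}-w_{e^*}\big),$$ then the bottleneck assignment $e^*$ is robust to every perturbation in $\Lambda_\Delta$. (ii) If $\mathcal{G}^+$ has no maximum matching and $0\le\Delta\le\tfrac12(w_{e^*}-w_{e^-})$, then the bottleneck assignment $e^*$ is robust to every perturbation in $\Lambda_\Delta$.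
   Context: A weighted bipartite graph $\mathcal{G}=(\mathcal{V}_A\cup\mathcal{V}_T,\mathcal{E},w)$ has disjoint vertex sets $\mathcal{V}_A,\mathcal{V}_T$, edge set $\mathcal{E}\subseteq\mathcal{V}_A\times\mathcal{V}_T$ and real edge weights $w_e$. A matching is a set of pairwise non-adjacent edges. A maximum matching of such a graph is a matching covering every vertex of the agent side $\mathcal{V}_A$. For a graph $H$ with at least one maximum matching, $b(H)=\min_M\max_{e\in M}w_e$ over maximum matchings $M$ of $H$; a bottleneck edge of $H$ is an edge $e$ with $w_e=b(H)$ lying in some maximum matching $M$ with $\max_{e'\in M}w_{e'}=b(H)$; $A(H)$ is the set of bottleneck edges. Given perturbations $\{\delta_e\}_{e\in\mathcal{E}}\subset\mathbb{R}$, the perturbed graph $\bar{\mathcal{G}}$ has the same vertices and edges as $\mathcal{G}$ and weights $\bar w_e=w_e+\delta_e$. The bottleneck assignment $e^*\in A(\mathcal{G})$ is said to be robust to the perturbation $\{\delta_e\}$ if $e^*\in A(\bar{\mathcal{G}})$. *)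

theory Defs
  imports Complex_Main
begin

text \<open>A weighted bipartite graph is given by agent vertices VA :: 'a set, task vertices
VT :: 'b set (disjoint by typing), an edge set E \<subseteq> VA \<times> VT and weights w on edges.\<close>

definition bip_graph :: "'a set \<Rightarrow> 'b set \<Rightarrow> ('a \<times> 'b) set \<Rightarrow> bool" where
  "bip_graph VA VT E \<longleftrightarrow> finite VA \<and> finite VT \<and> E \<subseteq> VA \<times> VT"

definition is_matching :: "('a \<times> 'b) set \<Rightarrow> bool" where
  "is_matching M \<longleftrightarrow>
     (\<forall>e\<in>M. \<forall>e'\<in>M. e \<noteq> e' \<longrightarrow> fst e \<noteq> fst e' \<and> snd e \<noteq> snd e')"

definition max_matching :: "'a set \<Rightarrow> 'b set \<Rightarrow> ('a \<times> 'b) set \<Rightarrow> ('a \<times> 'b) set \<Rightarrow> bool" where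
  "max_matching VA VT E M \<longleftrightarrow> M \<subseteq> E \<and> is_matching M \<and> (\<forall>v\<in>VA. \<exists>e\<in>M. fst e = v)"

definition has_max_matching :: "'a set \<Rightarrow> 'b set \<Rightarrow> ('a \<times> 'b) set \<Rightarrow> bool" where
  "has_max_matching VA VT E \<longleftrightarrow> (\<exists>M. max_matching VA VT E M)"

definition bottleneck_value ::
  "'a set \<Rightarrow> 'b set \<Rightarrow> ('a \<times> 'b) set \<Rightarrow> ('a \<times> 'b \<Rightarrow> real) \<Rightarrow> real" where
  "bottleneck_value VA VT E w = Min {Max (w ` M) | M. max_matching VA VT E M}"

definition bottleneck_edge ::
  "'a set \<Rightarrow> 'b set \<Rightarrow> ('a \<times> 'b) set \<Rightarrow> ('a \<times> 'b \<Rightarrow> real) \<Rightarrow> 'a \<times> 'b \<Rightarrow> bool" where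
  "bottleneck_edge VA VT E w e \<longleftrightarrow>
     w e = bottleneck_value VA VT E w \<and>
     (\<exists>M. max_matching VA VT E M \<and> e \<in> M \<and> Max (w ` M) = bottleneck_value VA VT E w)"

definition minus_VA :: "'a set \<Rightarrow> 'a \<times> 'b \<Rightarrow> 'a set" where
  "minus_VA VA e = VA - {fst e}"
definition minus_VT :: "'b set \<Rightarrow> 'a \<times> 'b \<Rightarrow> 'b set" where
  "minus_VT VT e = VT - {snd e}"
definition minus_E :: "('a \<times> 'b) set \<Rightarrow> 'a \<times> 'b \<Rightarrow> ('a \<times> 'b) set" where
  "minus_E E e = {e' \<in> E. fst e' \<noteq> fst e \<and> snd e' \<noteq> snd e}"
definition plus_E :: "('a \<times> 'b) set \<Rightarrow> 'a \<times> 'b \<Rightarrow> ('a \<times> 'b) set" where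
  "plus_E E e = E - {e}"

end

theory Submission
  imports Defs
begin

text \<open>Deleting the endpoints of \<open>e\<^sup>*\<close> and re-inserting \<open>e\<^sup>*\<close> turns a bottleneck matching of
\<open>\<G>\<^sup>-\<close> into a maximum matching of \<open>\<G>\<close> in which \<open>e\<^sup>*\<close> outweighs every other edge by at
least \<open>2\<Delta>\<close>, so after a perturbation of size \<open>\<Delta>\<close> it is still the heaviest edge there. A
maximum matching avoiding \<open>e\<^sup>*\<close> is one of \<open>\<G>\<^sup>+\<close>, so its heaviest edge weighs at least
\<open>w(e\<^sup>+) \<ge> w(e\<^sup>*) + 2\<Delta>\<close>, and after the perturbation still at least the weight of \<open>e\<^sup>*\<close>;
if \<open>\<G>\<^sup>+\<close> has no maximum matching, there is no such matching at all.\<close>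

lemma bip_graph_finite_edges:
  assumes "bip_graph VA VT E"
  shows "finite E"
  using assms unfolding bip_graph_def by (meson finite_SigmaI finite_subset)

lemma finite_max_matchings:
  assumes "finite E"
  shows "finite {M. max_matching VA VT E M}"
proof (rule finite_subset)
  show "{M. max_matching VA VT E M} \<subseteq> Pow E"
    by (auto simp: max_matching_def)
qed (use assms in simp)

lemma max_matching_nonempty:
  assumes "max_matching VA VT E M" "VA \<noteq> {}"
  shows "M \<noteq> {}"
  using assms unfolding max_matching_def by auto

lemma max_matching_plus_E_iff:
  "max_matching VA VT (plus_E E e) M \<longleftrightarrow> max_matching VA VT E M \<and> e \<notin> M"
  unfolding max_matching_def plus_E_def by auto

lemma max_matching_insert_minus:
  assumes "max_matching (minus_VA VA e) (minus_VT VT e) (minus_E E e) N" "e \<in> E"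
  shows "max_matching VA VT E (insert e N)"
  using assms unfolding max_matching_def is_matching_def minus_E_def minus_VA_def by auto

lemma bottleneck_value_le_Max:
  assumes "finite E" "max_matching VA VT E M"
  shows "bottleneck_value VA VT E w \<le> Max (w ` M)"
  unfolding bottleneck_value_def
  using finite_max_matchings[OF assms(1)] assms(2) by (intro Min_le) auto

lemma bottleneck_edgeI:
  assumes "finite E" "max_matching VA VT E M\<^sub>0" "e \<in> M\<^sub>0" "Max (w ` M\<^sub>0) = w e"
    and "\<And>M. max_matching VA VT E M \<Longrightarrow> w e \<le> Max (w ` M)"
  shows "bottleneck_edge VA VT E w e"
proof -
  have "bottleneck_value VA VT E w = w e"
    unfolding bottleneck_value_def
  proof (rule Min_eqI)
    show "finite {Max (w ` M) |M. max_matching VA VT E M}"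
      using finite_max_matchings[OF assms(1)] by simp
    show "w e \<in> {Max (w ` M) |M. max_matching VA VT E M}"
      using assms(2,4) by force
  qed (use assms(5) in blast)
  then show ?thesis
    unfolding bottleneck_edge_def using assms(2-4) by auto
qed

lemma bottleneck_edge_le_Max:
  assumes "finite E" "bottleneck_edge VA VT E w e" "max_matching VA VT E M"
  shows "w e \<le> Max (w ` M)"
  using assms(2) bottleneck_value_le_Max[OF assms(1,3)] unfolding bottleneck_edge_def by simp

lemma bottleneck_edge_max_matching:
  assumes "finite E" "bottleneck_edge VA VT E w e"
  obtains M where "max_matching VA VT E M" "e \<in> M" "\<And>e'. e' \<in> M \<Longrightarrow> w e' \<le> w e"
proof -
  obtain M where M: "max_matching VA VT E M" "e \<in> M" "Max (w ` M) = w e"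
    using assms(2) unfolding bottleneck_edge_def by metis
  have "M \<subseteq> E"
    using M(1) unfolding max_matching_def by blast
  then have "finite M"
    using assms(1) by (rule finite_subset)
  then have "w e' \<le> w e" if "e' \<in> M" for e'
    using that M(3) by (metis Max_ge finite_imageI imageI)
  with M(1,2) show thesis
    using that by blast
qed

lemma Max_image_le_Max_image_add:
  fixes f g :: "'a \<Rightarrow> real"
  assumes "finite M" "M \<noteq> {}" "\<And>x. x \<in> M \<Longrightarrow> f x \<le> g x + c"
  shows "Max (f ` M) \<le> Max (g ` M) + c"
proof -
  have "Max (f ` M) \<in> f ` M"
    using assms(1,2) by (intro Max_in) auto
  then obtain x where "x \<in> M" "Max (f ` M) = f x"
    by blast
  moreover have "g x \<le> Max (g ` M)"
    using \<open>x \<in> M\<close> assms(1) by simp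
  ultimately show ?thesis
    using assms(3) by fastforce
qed

lemma bottleneck_edge_perturbed:
  assumes "bip_graph VA VT E"
    and M\<^sub>0: "max_matching VA VT E M\<^sub>0" "e \<in> M\<^sub>0"
    and lead: "\<And>e'. e' \<in> M\<^sub>0 - {e} \<Longrightarrow> w e' + 2 * \<Delta> \<le> w e"
    and avoid: "\<And>M. max_matching VA VT E M \<Longrightarrow> e \<notin> M \<Longrightarrow> w e + 2 * \<Delta> \<le> Max (w ` M)"
    and \<delta>: "\<And>e'. e' \<in> E \<Longrightarrow> \<bar>\<delta> e'\<bar> \<le> \<Delta>"
  shows "bottleneck_edge VA VT E (\<lambda>e'. w e' + \<delta> e') e"
proof -
  have finE: "finite E"
    using assms(1) by (rule bip_graph_finite_edges)
  have sub: "M \<subseteq> E" if "max_matching VA VT E M" for M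
    using that unfolding max_matching_def by blast
  have fin: "finite M" if "max_matching VA VT E M" for M
    using sub[OF that] finE by (rule finite_subset)
  have "e \<in> E"
    using M\<^sub>0 sub by blast
  then have "VA \<noteq> {}"
    using assms(1) unfolding bip_graph_def by auto
  show ?thesis
  proof (rule bottleneck_edgeI[OF finE M\<^sub>0])
    show "Max ((\<lambda>e'. w e' + \<delta> e') ` M\<^sub>0) = w e + \<delta> e"
    proof (rule Max_eqI)
      fix y assume "y \<in> (\<lambda>e'. w e' + \<delta> e') ` M\<^sub>0"
      then obtain e' where "e' \<in> M\<^sub>0" "y = w e' + \<delta> e'" by blast
      moreover have "\<bar>\<delta> e'\<bar> \<le> \<Delta>"
        using \<delta> sub[OF M\<^sub>0(1)] \<open>e' \<in> M\<^sub>0\<close> by blast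
      ultimately show "y \<le> w e + \<delta> e"
        using lead[of e'] \<delta>[OF \<open>e \<in> E\<close>] by (cases "e' = e") (auto simp: abs_le_iff)
    qed (use fin[OF M\<^sub>0(1)] M\<^sub>0(2) in auto)
  next
    fix M assume M: "max_matching VA VT E M"
    show "w e + \<delta> e \<le> Max ((\<lambda>e'. w e' + \<delta> e') ` M)"
    proof (cases "e \<in> M")
      case True
      then show ?thesis using fin[OF M] by simp
    next
      case False
      have "Max (w ` M) \<le> Max ((\<lambda>e'. w e' + \<delta> e') ` M) + \<Delta>"
      proof (rule Max_image_le_Max_image_add[OF fin[OF M] max_matching_nonempty[OF M \<open>VA \<noteq> {}\<close>]])
        fix e' assume "e' \<in> M"
        then have "\<bar>\<delta> e'\<bar> \<le> \<Delta>"
          using \<delta> sub[OF M] by blast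
        then show "w e' \<le> w e' + \<delta> e' + \<Delta>"
          by (simp add: abs_le_iff)
      qed
      then show ?thesis
        using avoid[OF M False] \<delta>[OF \<open>e \<in> E\<close>] by (auto simp: abs_le_iff)
    qed
  qed
qed

lemma bottleneck_edge_perturbed_minus_plus:
  assumes graph: "bip_graph VA VT E" and "e \<in> E"
    and N: "max_matching (minus_VA VA e) (minus_VT VT e) (minus_E E e) N"
    and lead: "\<And>e'. e' \<in> N \<Longrightarrow> w e' + 2 * \<Delta> \<le> w e"
    and plus: "\<And>M. max_matching VA VT (plus_E E e) M \<Longrightarrow> w e + 2 * \<Delta> \<le> Max (w ` M)"
    and \<delta>: "\<forall>e'\<in>E. \<bar>\<delta> e'\<bar> \<le> \<Delta>"
  shows "bottleneck_edge VA VT E (\<lambda>e'. w e' + \<delta> e') e"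
proof (rule bottleneck_edge_perturbed[OF graph max_matching_insert_minus[OF N \<open>e \<in> E\<close>]])
  show "e \<in> insert e N" by simp
next
  fix e' assume "e' \<in> insert e N - {e}"
  then show "w e' + 2 * \<Delta> \<le> w e"
    using lead by simp
next
  fix M assume "max_matching VA VT E M" "e \<notin> M"
  then show "w e + 2 * \<Delta> \<le> Max (w ` M)"
    using plus max_matching_plus_E_iff by blast
qed (use \<delta> in blast)

theorem theorem1:
  fixes VA :: "'a set" and VT :: "'b set" and E :: "('a \<times> 'b) set"
    and w :: "'a \<times> 'b \<Rightarrow> real" and e_star e_minus :: "'a \<times> 'b" and \<Delta> :: real
  assumes graph: "bip_graph VA VT E"
    and card_le: "card VA \<le> card VT"
    and has_mm: "has_max_matching VA VT E"
    and estar: "bottleneck_edge VA VT E w e_star"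
    and eminus: "bottleneck_edge (minus_VA VA e_star) (minus_VT VT e_star) (minus_E E e_star) w e_minus"
  shows
    "(\<forall>e_plus. has_max_matching VA VT (plus_E E e_star) \<and>
        bottleneck_edge VA VT (plus_E E e_star) w e_plus \<and>
        0 \<le> \<Delta> \<and> \<Delta> \<le> min (w e_star - w e_minus) (w e_plus - w e_star) / 2 \<longrightarrow>
        (\<forall>\<delta> :: 'a \<times> 'b \<Rightarrow> real. (\<forall>e\<in>E. \<bar>\<delta> e\<bar> \<le> \<Delta>) \<longrightarrow>
           bottleneck_edge VA VT E (\<lambda>e. w e + \<delta> e) e_star))
     \<and>
     (\<not> has_max_matching VA VT (plus_E E e_star) \<and>
        0 \<le> \<Delta> \<and> \<Delta> \<le> (w e_star - w e_minus) / 2 \<longrightarrow>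
        (\<forall>\<delta> :: 'a \<times> 'b \<Rightarrow> real. (\<forall>e\<in>E. \<bar>\<delta> e\<bar> \<le> \<Delta>) \<longrightarrow>
           bottleneck_edge VA VT E (\<lambda>e. w e + \<delta> e) e_star))"
proof -
  have finE: "finite E"
    using graph by (rule bip_graph_finite_edges)
  have "e_star \<in> E"
    using estar unfolding bottleneck_edge_def max_matching_def by blast
  have "finite (minus_E E e_star)" "finite (plus_E E e_star)"
    using finE unfolding minus_E_def plus_E_def by simp_all
  obtain N where N: "max_matching (minus_VA VA e_star) (minus_VT VT e_star) (minus_E E e_star) N"
    and N_le: "\<And>e. e \<in> N \<Longrightarrow> w e \<le> w e_minus"
    using bottleneck_edge_max_matching[OF \<open>finite (minus_E E e_star)\<close> eminus] by metis
  have lead: "w e + 2 * \<Delta> \<le> w e_star" if "\<Delta> \<le> (w e_star - w e_minus) / 2" "e \<in> N" for e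
    using N_le[OF that(2)] that(1) by (simp add: field_simps)
  show ?thesis
  proof (intro conjI allI impI)
    fix e_plus \<delta>
    assume "has_max_matching VA VT (plus_E E e_star) \<and>
        bottleneck_edge VA VT (plus_E E e_star) w e_plus \<and>
        0 \<le> \<Delta> \<and> \<Delta> \<le> min (w e_star - w e_minus) (w e_plus - w e_star) / 2"
    then have e_plus: "bottleneck_edge VA VT (plus_E E e_star) w e_plus"
      and margin_minus: "\<Delta> \<le> (w e_star - w e_minus) / 2"
      and margin_plus: "\<Delta> \<le> (w e_plus - w e_star) / 2"
      by auto
    have plus: "w e_star + 2 * \<Delta> \<le> Max (w ` M)" if "max_matching VA VT (plus_E E e_star) M" for M
      using bottleneck_edge_le_Max[OF \<open>finite (plus_E E e_star)\<close> e_plus that] margin_plus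
      by (simp add: field_simps)
    assume "\<forall>e\<in>E. \<bar>\<delta> e\<bar> \<le> \<Delta>"
    from bottleneck_edge_perturbed_minus_plus[OF graph \<open>e_star \<in> E\<close> N lead[OF margin_minus] plus this]
    show "bottleneck_edge VA VT E (\<lambda>e. w e + \<delta> e) e_star" .
  next
    fix \<delta>
    assume "\<not> has_max_matching VA VT (plus_E E e_star) \<and> 0 \<le> \<Delta> \<and> \<Delta> \<le> (w e_star - w e_minus) / 2"
    then have "\<And>M. \<not> max_matching VA VT (plus_E E e_star) M"
      and margin: "\<Delta> \<le> (w e_star - w e_minus) / 2"
      by (auto simp: has_max_matching_def)
    then have plus: "w e_star + 2 * \<Delta> \<le> Max (w ` M)" if "max_matching VA VT (plus_E E e_star) M" for M
      using that by blast
    assume "\<forall>e\<in>E. \<bar>\<delta> e\<bar> \<le> \<Delta>"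
    from bottleneck_edge_perturbed_minus_plus[OF graph \<open>e_star \<in> E\<close> N lead[OF margin] plus this]
    show "bottleneck_edge VA VT E (\<lambda>e. w e + \<delta> e) e_star" .
  qed
qed

end
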